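(* Let $L$ be a loss function satisfying axioms (A1), (A2), (A5), (A6), (A7) listed in the context. Then there exists a single real constant $K$ such that for every variable $X$ and every $p\in[0,1]$, $L(X,p)=-K\log p$ and $L(\neg X,p)=-K\log(1-p)$.
   Context: For a finite set $V$ of Boolean variables, a sentence over $V$ is a propositional formula built from variables in $V$; $\mathit{true}$ is the constant true sentence. A loss function $L$ assigns to every $\mathbf p\in[0,1]^V$ and every sentence $\alpha$ with variables in $V$ a value $L(\alpha,\mathbf p)\in\mathbb R\cup\{+\infty\}$; $-\log 0=+\infty$. In $L(X,p)$, $p$ is a vector over $\{X\}$. For disjoint $X,Y$, $[\mathbf p\,\mathbf q]$ is the concatenation of $\mathbf p\in[0,1]^X$, $\mathbf q\in[0,1]^Y$. (A1) Truth: $L(\mathit{true},\mathbf p)=0$ for all $\mathbf p$. (A2) Additive independence: for $\alpha$ over $X$, $\beta$ over $Y$, $X\cap Y=\emptyset$: $L(\alpha\wedge\beta,[\mathbf p\,\mathbf q])=L(\alpha,\mathbf p)+L(\beta,\mathbf q)$. (A5) Label-literal correspondence: for each variable $X$ there are real constants $K_X,K'_X$ with $L(X,p)=-K_X\log p$ and $L(\neg X,p)=-K'_X\log(1-p)$ for all $p\in[0,1]$. (A6) Value symmetry: $L(\alpha,\mathbf p)=L(\bar\alpha,\mathbf 1-\mathbf p)$, where $\bar\alpha$ replaces each variable by its negation and $\mathbf 1-\mathbf p$ is componentwise. (A7) Variable symmetry: for a permutation $\pi$ of the variable set of $\mathbf p$, $L(\alpha,\mathbf p)=L(\pi(\alpha),\pi(\mathbf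 p))$, with $\pi(\alpha)$ the renamed sentence and $\pi(\mathbf p)$ the permuted vector. *)

theory Defs
  imports Complex_Main "HOL-Library.Extended_Real" "HOL-Combinatorics.Permutations"
begin

datatype 'v sentence =
    TrueS | FalseS | Var 'v | Neg "'v sentence"
  | Conj "'v sentence" "'v sentence" | Disj "'v sentence" "'v sentence"
  | Imp "'v sentence" "'v sentence" | Iff "'v sentence" "'v sentence"

fun bar :: "'v sentence \<Rightarrow> 'v sentence" where
  "bar TrueS = TrueS"
| "bar FalseS = FalseS"
| "bar (Var x) = Neg (Var x)"
| "bar (Neg a) = Neg (bar a)"
| "bar (Conj a b) = Conj (bar a) (bar b)"
| "bar (Disj a b) = Disj (bar a) (bar b)"
| "bar (Imp a b) = Imp (bar a) (bar b)"
| "bar (Iff a b) = Iff (bar a) (bar b)"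

text \<open>A vector p in [0,1]^V, represented canonically as a function that is 0 outside V.\<close>
definition is_vec :: "'v set \<Rightarrow> ('v \<Rightarrow> real) \<Rightarrow> bool" where
  "is_vec V p \<longleftrightarrow> (\<forall>x\<in>V. 0 \<le> p x \<and> p x \<le> 1) \<and> (\<forall>x. x \<notin> V \<longrightarrow> p x = 0)"

definition concat :: "'v set \<Rightarrow> ('v \<Rightarrow> real) \<Rightarrow> ('v \<Rightarrow> real) \<Rightarrow> ('v \<Rightarrow> real)" where
  "concat X p q = (\<lambda>v. if v \<in> X then p v else q v)"

definition one_minus :: "'v set \<Rightarrow> ('v \<Rightarrow> real) \<Rightarrow> ('v \<Rightarrow> real)" where
  "one_minus V p = (\<lambda>v. if v \<in> V then 1 - p v else 0)"

definition single :: "'v \<Rightarrow> real \<Rightarrow> ('v \<Rightarrow> real)" where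
  "single X a = (\<lambda>v. if v = X then a else 0)"

definition neglog :: "real \<Rightarrow> ereal" where
  "neglog a = (if a = 0 then \<infinity> else ereal (- ln a))"

text \<open>A loss function: L V p alpha is the loss of sentence alpha (vars in V) at p in [0,1]^V.\<close>
type_synonym 'v loss = "'v set \<Rightarrow> ('v \<Rightarrow> real) \<Rightarrow> 'v sentence \<Rightarrow> ereal"

definition A1 :: "'v loss \<Rightarrow> bool" where
  "A1 L \<longleftrightarrow> (\<forall>V p. finite V \<and> is_vec V p \<longrightarrow> L V p TrueS = 0)"

definition A2 :: "'v loss \<Rightarrow> bool" where
  "A2 L \<longleftrightarrow> (\<forall>X Y a b p q. finite X \<and> finite Y \<and> X \<inter> Y = {} \<and>
      set_sentence a \<subseteq> X \<and> set_sentence b \<subseteq> Y \<and> is_vec X p \<and> is_vec Y q \<longrightarrow>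
      L (X \<union> Y) (concat X p q) (Conj a b) = L X p a + L Y q b)"

definition A5 :: "'v loss \<Rightarrow> bool" where
  "A5 L \<longleftrightarrow> (\<exists>K K' :: 'v \<Rightarrow> real. \<forall>X a. 0 \<le> a \<and> a \<le> 1 \<longrightarrow>
      L {X} (single X a) (Var X) = ereal (K X) * neglog a \<and>
      L {X} (single X a) (Neg (Var X)) = ereal (K' X) * neglog (1 - a))"

definition A6 :: "'v loss \<Rightarrow> bool" where
  "A6 L \<longleftrightarrow> (\<forall>V p a. finite V \<and> is_vec V p \<and> set_sentence a \<subseteq> V \<longrightarrow>
      L V p a = L V (one_minus V p) (bar a))"

definition A7 :: "'v loss \<Rightarrow> bool" where
  "A7 L \<longleftrightarrow> (\<forall>V p a \<pi>. finite V \<and> is_vec V p \<and> set_sentence a \<subseteq> V \<and> \<pi> permutes V \<longrightarrow>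
      L V p a = L V (p \<circ> inv \<pi>) (map_sentence \<pi> a))"

end

theory Submission
  imports Defs
begin

text \<open>
  Value symmetry identifies the loss of \<open>X\<close> at \<open>p\<close> with the loss of \<open>\<not>X\<close> at \<open>1 - p\<close>,
  so \<open>K'\<^sub>X = K\<^sub>X\<close>. Padding \<open>X\<close> with a second variable \<open>Y\<close> by a conjunction with
  \<open>true\<close> does not change its loss (A1, A2), and the transposition of \<open>X\<close> and \<open>Y\<close> leaves the
  padded vector fixed (A7), so \<open>X\<close> and \<open>Y\<close> have the same loss and \<open>K\<^sub>X = K\<^sub>Y\<close>.
  All constants are compared at \<open>p = e\<^sup>-\<^sup>1\<close>, where \<open>-log p = 1\<close>.
\<close>

lemma is_vec_single: "0 \<le> a \<Longrightarrow> a \<le> 1 \<Longrightarrow> is_vec {X} (single X a)"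
  by (auto simp: is_vec_def single_def)

lemma neglog_exp_minus_one: "neglog (exp (-1)) = 1"
  by (simp add: neglog_def one_ereal_def)

lemma one_minus_single: "one_minus {X} (single X a) = single X (1 - a)"
  by (auto simp: one_minus_def single_def)

lemma loss_var_eq_loss_neg_var:
  assumes "A6 L" "0 \<le> a" "a \<le> 1"
  shows "L {X} (single X a) (Var X) = L {X} (single X (1 - a)) (Neg (Var X))"
proof -
  have "L {X} (single X a) (Var X) = L {X} (one_minus {X} (single X a)) (bar (Var X))"
    using assms(1)[unfolded A6_def, rule_format, of "{X}" "single X a" "Var X"]
      is_vec_single[OF assms(2,3), of X] by simp
  then show ?thesis
    by (simp add: one_minus_single)
qed

definition pair_vec :: "'v \<Rightarrow> 'v \<Rightarrow> real \<Rightarrow> ('v \<Rightarrow> real)" where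
  "pair_vec X Y a = (\<lambda>v. if v = X \<or> v = Y then a else 0)"

lemma pair_vec_commute: "pair_vec X Y a = pair_vec Y X a"
  by (auto simp: pair_vec_def)

lemma loss_conj_true_pair_vec:
  assumes "A1 L" "A2 L" "X \<noteq> Y" "0 \<le> a" "a \<le> 1"
  shows "L {X, Y} (pair_vec X Y a) (Conj (Var X) TrueS) = L {X} (single X a) (Var X)"
proof -
  have "concat {X} (single X a) (single Y a) = pair_vec X Y a"
    by (auto simp: concat_def single_def pair_vec_def)
  moreover have "L {Y} (single Y a) TrueS = 0"
    using assms(1)[unfolded A1_def] is_vec_single[OF assms(4,5), of Y] by blast
  moreover have "L ({X} \<union> {Y}) (concat {X} (single X a) (single Y a)) (Conj (Var X) TrueS)
      = L {X} (single X a) (Var X) + L {Y} (single Y a) TrueS"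
    using assms(2)[unfolded A2_def, rule_format, of "{X}" "{Y}" "Var X" TrueS]
      assms(3) is_vec_single[OF assms(4,5), of X] is_vec_single[OF assms(4,5), of Y] by simp
  ultimately show ?thesis
    by (simp add: insert_commute)
qed

lemma loss_var_rename:
  assumes "A1 L" "A2 L" "A7 L" "0 \<le> a" "a \<le> 1"
  shows "L {X} (single X a) (Var X) = L {Y} (single Y a) (Var Y)"
proof (cases "X = Y")
  case False
  let ?\<pi> = "transpose X Y"
  have "?\<pi> permutes {X, Y}"
    by (rule permutes_swap_id) auto
  moreover have "is_vec {X, Y} (pair_vec X Y a)"
    using assms(4,5) by (auto simp: is_vec_def pair_vec_def)
  ultimately have "L {X, Y} (pair_vec X Y a) (Conj (Var X) TrueS)
      = L {X, Y} (pair_vec X Y a \<circ> inv ?\<pi>) (map_sentence ?\<pi> (Conj (Var X) TrueS))"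
    using assms(3)[unfolded A7_def, rule_format, of "{X, Y}"] by simp
  moreover have "pair_vec X Y a \<circ> inv ?\<pi> = pair_vec X Y a"
    by (auto simp: pair_vec_def transpose_def fun_eq_iff)
  ultimately have "L {X, Y} (pair_vec X Y a) (Conj (Var X) TrueS)
      = L {Y, X} (pair_vec Y X a) (Conj (Var Y) TrueS)"
    by (simp add: insert_commute pair_vec_commute)
  then show ?thesis
    using loss_conj_true_pair_vec[OF assms(1,2) False assms(4,5)]
      loss_conj_true_pair_vec[OF assms(1,2) False[symmetric] assms(4,5)]
    by simp
qed simp

theorem lemma2:
  fixes L :: "'v loss"
  assumes "A1 L" and "A2 L" and "A5 L" and "A6 L" and "A7 L"
  shows "\<exists>K :: real. \<forall>X a. 0 \<le> a \<and> a \<le> 1 \<longrightarrow>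
           L {X} (single X a) (Var X) = ereal K * neglog a \<and>
           L {X} (single X a) (Neg (Var X)) = ereal K * neglog (1 - a)"
proof -
  obtain K K' :: "'v \<Rightarrow> real" where KK': "\<And>X a. 0 \<le> a \<Longrightarrow> a \<le> 1 \<Longrightarrow>
      L {X} (single X a) (Var X) = ereal (K X) * neglog a \<and>
      L {X} (single X a) (Neg (Var X)) = ereal (K' X) * neglog (1 - a)"
    using assms(3) unfolding A5_def by blast
  define e :: real where "e = exp (-1)"
  have e: "0 \<le> e" "e \<le> 1" "0 \<le> 1 - e" "1 - e \<le> 1" "neglog e = 1"
    by (auto simp: e_def neglog_exp_minus_one)
  have "K' X = K X" for X
    using loss_var_eq_loss_neg_var[OF assms(4) e(1,2), of X] KK'[OF e(1,2)] KK'[OF e(3,4)] e(5)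
    by simp
  moreover have "K X = K Y" for X Y
    using loss_var_rename[OF assms(1,2,5) e(1,2), of X Y] KK'[OF e(1,2)] e(5) by simp
  ultimately show ?thesis
    using KK' by metis
qed

end
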